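(* Let $c\in\operatorname{int}\Delta$ and let $\underline M$ be as defined below. For every $M>\underline M$ the replicator–mutator dynamics $\dot x=\phi^M(x)$ has exactly one mutation equilibrium $x^M\in\Delta$, and the map $\mathcal M:(\underline M,\infty)\to\Delta$, $M\mapsto x^M$, is continuously differentiable.
   Context: Let $I=\{1,\dots,N\}$ be a finite set of populations; population $i$ has the finite type set $S_i=\{1,\dots,n_i\}$. Let $S=\{(i,h): i\in I, h\in S_i\}$, $\Delta_i=\{x_i\in\mathbb R^{n_i}_{\ge 0}:\sum_{h\le n_i}x_{ih}=1\}$, $\Delta=\prod_{i\in I}\Delta_i\subset\mathbb R^S$, and $\operatorname{int}\Delta=\{x\in\Delta: x_{ih}>0 \text{ for all }(i,h)\in S\}$. For each $(i,h)\in S$ let $f_{ih}\in C^1(U,\mathbb R)$ for some open $U\supset\Delta$, with $\partial f_{ih}/\partial x_{ik}=0$ for all $i\in I$, $h,k\in S_i$. Put $\bar f_i(x)=\sum_{h\le n_i}x_{ih}f_{ih}(x)$, $\phi_{ih}(x)=x_{ih}(f_{ih}(x)-\bar f_i(x))$, and for $M\ge0$, $c\in\operatorname{int}\Delta$, $\phi^M_{ih}(x)=\phi_{ih}(x)+M(c_{ih}-x_{ih})$. A mutation equilibrium for $M$ is $x\in\Delta$ with $\phi^M(x)=0$. Reduced system: for each $i$ substitute $x_{in_i}=1-\sum_{k<n_i}x_{ik}$ and drop the equation for $x_{in_i}$, yielding $\tilde\phi,\tilde\phi^M$ with $D\tilde\phi^M=D\tilde\phi-M\,\mathrm{Id}$.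 Define $\underline M=\max\bigl(0,\sup\{\operatorname{Re}\lambda:\lambda\text{ eigenvalue of }D\tilde\phi(x),x\in\Delta\}\bigr)$. *)

theory Defs
  imports "HOL-Analysis.Analysis"
begin

text \<open>The finite index type 's plays the role of S = {(i,h)}; pop s is the
population of type s; the fibres of pop are the type sets S_i, ordered by the
linear order on 's (so the last type of population i is the maximum of its fibre).\<close>

definition pop_simplex :: "('s::finite \<Rightarrow> 'i) \<Rightarrow> ((real,'s) vec) set" where
  "pop_simplex pop = {x. (\<forall>s. 0 \<le> x$s) \<and> (\<forall>i. (\<Sum>s\<in>{t. pop t = i}. x$s) = 1)}"

definition int_simplex :: "('s::finite \<Rightarrow> 'i) \<Rightarrow> ((real,'s) vec) set" where
  "int_simplex pop = {x \<in> pop_simplex pop. \<forall>s. 0 < x$s}"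

definition fbar :: "('s::finite \<Rightarrow> 'i) \<Rightarrow> ('s \<Rightarrow> (real,'s) vec \<Rightarrow> real) \<Rightarrow> 'i \<Rightarrow> (real,'s) vec \<Rightarrow> real" where
  "fbar pop f i x = (\<Sum>t\<in>{t. pop t = i}. x$t * f t x)"

definition repl :: "('s::finite \<Rightarrow> 'i) \<Rightarrow> ('s \<Rightarrow> (real,'s) vec \<Rightarrow> real) \<Rightarrow> (real,'s) vec \<Rightarrow> (real,'s) vec" where
  "repl pop f x = (\<chi> s. x$s * (f s x - fbar pop f (pop s) x))"

definition repl_mut :: "('s::finite \<Rightarrow> 'i) \<Rightarrow> ('s \<Rightarrow> (real,'s) vec \<Rightarrow> real) \<Rightarrow> real \<Rightarrow> (real,'s) vec \<Rightarrow> (real,'s) vec \<Rightarrow> (real,'s) vec" where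
  "repl_mut pop f M c x = repl pop f x + M *\<^sub>R (c - x)"

definition last_type :: "('s::{finite,linorder} \<Rightarrow> 'i) \<Rightarrow> 'i \<Rightarrow> 's" where
  "last_type pop i = Max {t. pop t = i}"

definition dropped :: "('s::{finite,linorder} \<Rightarrow> 'i) \<Rightarrow> 's \<Rightarrow> bool" where
  "dropped pop s \<longleftrightarrow> s = last_type pop (pop s)"

definition embed :: "('s::{finite,linorder} \<Rightarrow> 'i) \<Rightarrow> (real,'s) vec \<Rightarrow> (real,'s) vec" where
  "embed pop y = (\<chi> s. if dropped pop s then 1 - (\<Sum>t\<in>{t. pop t = pop s \<and> t \<noteq> s}. y$t) else y$s)"

text \<open>Reduced system, embedded in R^S: the dropped coordinates are ignored as
inputs and their equations are replaced by 0.\<close>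
definition reduced :: "('s::{finite,linorder} \<Rightarrow> 'i) \<Rightarrow> ('s \<Rightarrow> (real,'s) vec \<Rightarrow> real) \<Rightarrow> (real,'s) vec \<Rightarrow> (real,'s) vec" where
  "reduced pop f y = (\<chi> s. if dropped pop s then 0 else repl pop f (embed pop y) $ s)"

definition reduced_jacobian :: "('s::{finite,linorder} \<Rightarrow> 'i) \<Rightarrow> ('s \<Rightarrow> (real,'s) vec \<Rightarrow> real) \<Rightarrow> (real,'s) vec \<Rightarrow> ((real,'s) vec,'s) vec" where
  "reduced_jacobian pop f x = matrix (frechet_derivative (reduced pop f) (at x))"

text \<open>Eigenvalues of the reduced Jacobian D(tilde phi)(x): eigenvectors supported on
the non-dropped coordinates (the reduced coordinates).\<close>
definition reduced_eigenvalue :: "('s::{finite,linorder} \<Rightarrow> 'i) \<Rightarrow> ('s \<Rightarrow> (real,'s) vec \<Rightarrow> real) \<Rightarrow> (real,'s) vec \<Rightarrow> complex \<Rightarrow> bool" where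
  "reduced_eigenvalue pop f x lam \<longleftrightarrow>
     (\<exists>v::(complex,'s) vec. v \<noteq> 0 \<and> (\<forall>s. dropped pop s \<longrightarrow> v$s = 0) \<and>
        (\<chi> i j. complex_of_real (reduced_jacobian pop f x $ i $ j)) *v v = lam *s v)"

text \<open>Lower threshold max(0, sup Re(spec)); sup of the empty set is taken as -infinity.\<close>
definition Mlow :: "('s::{finite,linorder} \<Rightarrow> 'i) \<Rightarrow> ('s \<Rightarrow> (real,'s) vec \<Rightarrow> real) \<Rightarrow> real" where
  "Mlow pop f = (let E = {Re lam | lam x. x \<in> pop_simplex pop \<and> reduced_eigenvalue pop f x lam}
                 in if E = {} then 0 else max 0 (Sup E))"

end

theory Submission
  imports Defs
begin

text \<open>For M > 0 Brouwer's theorem gives an equilibrium, and once M exceeds a Lipschitz constant of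
  the replicator field on the simplex the equilibrium is unique. Above the threshold M is never an
  eigenvalue of the reduced Jacobian, so by the implicit function theorem every equilibrium lies
  on a locally unique C1 branch. Compactness of the simplex makes the set of M with a unique
  equilibrium open, two distinct branches make its complement open, and connectedness of the
  interval spreads uniqueness from large M to all of it; the unique branch is the C1 map.\<close>

section \<open>Analysis and linear algebra\<close>

lemma has_derivative_vec_nth [derivative_intros]:
  "(g has_derivative g') F \<Longrightarrow> ((\<lambda>x. g x $ i) has_derivative (\<lambda>h. g' h $ i)) F"
  by (rule bounded_linear.has_derivative[OF bounded_linear_vec_nth])

lemma has_derivative_vec_lambda:
  fixes g :: "'s::finite \<Rightarrow> 'a::real_normed_vector \<Rightarrow> real"
  assumes "\<And>s. (g s has_derivative g' s) (at a within S)"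
  shows "((\<lambda>x. \<chi> s. g s x) has_derivative (\<lambda>h. \<chi> s. g' s h)) (at a within S)"
  using assms by (subst has_derivative_componentwise_within) (auto simp: Basis_vec_def inner_axis)

lemma continuous_on_Blinfun:
  fixes L :: "'a::t2_space \<Rightarrow> 'b::euclidean_space \<Rightarrow> 'c::real_normed_vector"
  assumes "\<And>x. x \<in> S \<Longrightarrow> bounded_linear (L x)" and "\<And>h. continuous_on S (\<lambda>x. L x h)"
  shows "continuous_on S (\<lambda>x. Blinfun (L x))"
proof (rule continuous_on_blinfun_componentwise)
  fix h :: 'b
  show "continuous_on S (\<lambda>x. blinfun_apply (Blinfun (L x)) h)"
    using assms(2)[of h] by (rule continuous_on_eq) (simp add: assms(1) bounded_linear_Blinfun_apply)
qed

lemma C1_imp_lipschitz_on_compact_convex: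
  fixes g :: "'a::euclidean_space \<Rightarrow> 'b::real_normed_vector"
  assumes "compact K" "convex K"
    and der: "\<And>x. x \<in> K \<Longrightarrow> (g has_derivative g' x) (at x within K)"
    and cont: "\<And>h. continuous_on K (\<lambda>x. g' x h)"
  obtains L where "L-lipschitz_on K g"
proof -
  have bl: "bounded_linear (g' x)" if "x \<in> K" for x
    using der[OF that] by (rule has_derivative_bounded_linear)
  obtain B where "B \<ge> 0" and B: "\<And>x. x \<in> K \<Longrightarrow> norm (Blinfun (g' x)) \<le> B"
    using continuous_on_compact_bound[OF \<open>compact K\<close> continuous_on_Blinfun[OF bl cont]] by blast
  have "B-lipschitz_on K g"
  proof (rule bounded_derivative_imp_lipschitz[OF der \<open>convex K\<close> _ \<open>B \<ge> 0\<close>])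
    show "onorm (g' x) \<le> B" if "x \<in> K" for x
      using B[OF that] by (simp add: norm_blinfun.rep_eq bounded_linear_Blinfun_apply[OF bl[OF that]])
  qed
  then show thesis by (rule that)
qed

lemma continuous_on_inv_blinfun_apply:
  fixes A :: "'x::t2_space \<Rightarrow> 'a::real_normed_vector \<Rightarrow>\<^sub>L 'b::euclidean_space"
  assumes cA: "continuous_on S A" and "open S" and bij: "\<And>z. z \<in> S \<Longrightarrow> bij (blinfun_apply (A z))"
  shows "continuous_on S (\<lambda>z. inv (blinfun_apply (A z)) w)"
proof -
  define u where "u z = inv (blinfun_apply (A z)) w" for z
  have Au: "blinfun_apply (A z) (u z) = w" if "z \<in> S" for z
    using bij[OF that] unfolding u_def by (meson bij_inv_eq_iff)
  have "isCont u z1" if z1: "z1 \<in> S" for z1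
  proof -
    have "inj (blinfun_apply (A z1))" using bij[OF z1] by (simp add: bij_is_inj)
    then obtain k where k: "k > 0" "\<And>x. k * norm x \<le> norm (blinfun_apply (A z1) x)"
      using linear_inj_bounded_below_pos[OF bounded_linear.linear[OF blinfun.bounded_linear_right]] by blast
    have tA: "(A \<longlongrightarrow> A z1) (at z1)"
      using cA \<open>open S\<close> z1 by (simp add: continuous_on_eq_continuous_at isCont_def)
    have near: "\<forall>\<^sub>F z in at z1. dist (A z) (A z1) < k/2"
      using tendstoD[OF tA, of "k/2"] k(1) by simp
    have inS: "\<forall>\<^sub>F z in at z1. z \<in> S"
      using \<open>open S\<close> z1 eventually_at_topological by blast
    have "\<forall>\<^sub>F z in at z1. norm (u z - u z1) \<le> norm (A z - A z1) * (2 / k * norm (u z1))"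
      using near inS
    proof eventually_elim
      case (elim z)
      let ?h = "u z - u z1"
      have "blinfun_apply (A z) ?h = - blinfun_apply (A z - A z1) (u z1)"
        using Au elim z1 by (simp add: blinfun.diff_right blinfun.diff_left)
      then have upper: "norm (blinfun_apply (A z) ?h) \<le> norm (A z - A z1) * norm (u z1)"
        by (simp add: norm_blinfun)
      \<comment> \<open>A z stays bounded below by k/2 because it is k/2-close to A z1\<close>
      have "norm (blinfun_apply (A z - A z1) ?h) \<le> norm (A z - A z1) * norm ?h"
        by (rule norm_blinfun)
      also have "\<dots> \<le> k/2 * norm ?h"
        using elim(1) by (intro mult_right_mono) (auto simp: dist_norm)
      finally have "norm (blinfun_apply (A z - A z1) ?h) \<le> k/2 * norm ?h" .
      moreover have "blinfun_apply (A z1) ?h = blinfun_apply (A z) ?h - blinfun_apply (A z - A z1) ?h"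
        by (simp add: blinfun.diff_left)
      then have "norm (blinfun_apply (A z1) ?h) \<le> norm (blinfun_apply (A z) ?h) + norm (blinfun_apply (A z - A z1) ?h)"
        by (metis norm_triangle_ineq4)
      ultimately have "k/2 * norm ?h \<le> norm (blinfun_apply (A z) ?h)"
        using k(2)[of ?h] by linarith
      with upper show ?case using k(1) by (simp add: field_simps)
    qed
    moreover have "((\<lambda>z. A z - A z1) \<longlongrightarrow> 0) (at z1)" using LIM_zero[OF tA] .
    ultimately have "((\<lambda>z. u z - u z1) \<longlongrightarrow> 0) (at z1)" by (rule tendsto_0_le[rotated])
    then show ?thesis unfolding isCont_def by (simp add: LIM_zero_iff)
  qed
  then show ?thesis unfolding u_def by (simp add: continuous_at_imp_continuous_on)
qed

lemma cmod_eigenvalue_le_row_sum: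
  fixes A :: "real^'n^'n" and v :: "complex^'n"
  assumes "v \<noteq> 0" and eigen: "(\<chi> i j. complex_of_real (A $ i $ j)) *v v = lam *s v"
  obtains i where "cmod lam \<le> (\<Sum>j\<in>UNIV. \<bar>A $ i $ j\<bar>)"
proof -
  define m where "m = Max (range (\<lambda>j. cmod (v $ j)))"
  have le_m: "cmod (v $ j) \<le> m" for j unfolding m_def by (rule Max_ge) auto
  have "m \<in> range (\<lambda>j. cmod (v $ j))" unfolding m_def by (rule Max_in) auto
  then obtain i where "m = cmod (v $ i)" by blast
  with le_m have i: "\<And>j. cmod (v $ j) \<le> cmod (v $ i)" by simp
  have "cmod (v $ i) > 0"
  proof (rule ccontr)
    assume "\<not> cmod (v $ i) > 0"
    then have "v $ j = 0" for j using i[of j] by simp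
    then show False using \<open>v \<noteq> 0\<close> by (simp add: vec_eq_iff)
  qed
  have "cmod lam * cmod (v $ i) = cmod (\<Sum>j\<in>UNIV. complex_of_real (A $ i $ j) * v $ j)"
    using arg_cong[OF eigen, of "\<lambda>w. w $ i"]
    by (simp add: matrix_vector_mult_def vector_scalar_mult_def norm_mult)
  also have "\<dots> \<le> (\<Sum>j\<in>UNIV. \<bar>A $ i $ j\<bar> * cmod (v $ j))"
    by (rule order_trans[OF norm_sum]) (simp add: norm_mult)
  also have "\<dots> \<le> (\<Sum>j\<in>UNIV. \<bar>A $ i $ j\<bar>) * cmod (v $ i)"
    unfolding sum_distrib_right by (intro sum_mono mult_left_mono i) auto
  finally show thesis using \<open>cmod (v $ i) > 0\<close> that by simp
qed

lemma blinfun_left_inverse: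
  fixes A :: "'a::euclidean_space \<Rightarrow>\<^sub>L 'b::euclidean_space"
  assumes "inj (blinfun_apply A)"
  obtains B where "B o\<^sub>L A = id_blinfun"
proof -
  obtain g where "linear g" and g: "g \<circ> blinfun_apply A = id"
    using linear_injective_left_inverse[OF bounded_linear.linear[OF blinfun.bounded_linear_right] assms] by blast
  have "Blinfun g o\<^sub>L A = id_blinfun"
    using g \<open>linear g\<close>
    by (intro blinfun_eqI) (simp add: bounded_linear_Blinfun_apply linear_conv_bounded_linear pointfree_idE)
  then show thesis by (rule that)
qed

lemma has_vector_derivative_snd_slice:
  assumes "(G has_derivative G') (at (M, y))"
  shows "((\<lambda>t. snd (G (t, y))) has_vector_derivative snd (G' (1, 0))) (at M)"
proof -
  have "((\<lambda>t. G (t, y)) has_derivative (\<lambda>t. G' (t, 0))) (at M)"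
    using has_derivative_compose[OF has_derivative_Pair[OF has_derivative_ident has_derivative_const] assms]
    by simp
  then have "((\<lambda>t. snd (G (t, y))) has_derivative (\<lambda>t. snd (G' (t, 0)))) (at M)"
    by (rule has_derivative_snd)
  moreover have "(\<lambda>t. snd (G' (t, 0))) = (\<lambda>t. t *\<^sub>R snd (G' (1, 0)))"
  proof
    fix t
    show "snd (G' (t, 0)) = t *\<^sub>R snd (G' (1, 0))"
      using linear_scale[OF has_derivative_linear[OF assms], of t "(1, 0)"] by simp
  qed
  ultimately show ?thesis unfolding has_vector_derivative_def by simp
qed

lemma implicit_function_real_parameter:
  fixes F :: "real \<times> 'a::euclidean_space \<Rightarrow> 'a"
  assumes "open W" and p0: "(M0, x0) \<in> W" and zero: "F (M0, x0) = 0"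
    and der: "\<And>p. p \<in> W \<Longrightarrow> (F has_derivative F' p) (at p)"
    and cont: "\<And>q. continuous_on W (\<lambda>p. F' p q)"
    and nondeg: "\<And>h. F' (M0, x0) (0, h) = 0 \<Longrightarrow> h = 0"
  obtains e d b b' where "e > 0" "d > 0" "b M0 = x0" "continuous_on (ball M0 e) b'"
    "\<And>M. M \<in> ball M0 e \<Longrightarrow> F (M, b M) = 0"
    "\<And>M. M \<in> ball M0 e \<Longrightarrow> (b has_vector_derivative b' M) (at M)"
    "\<And>M x. M \<in> ball M0 e \<Longrightarrow> dist x x0 < d \<Longrightarrow> F (M, x) = 0 \<Longrightarrow> x = b M"
proof -
  \<comment> \<open>apply the inverse function theorem to \<Psi>(M, x) = (M, F(M, x))\<close>
  define \<Psi> where "\<Psi> p = (fst p, F p)" for p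
  define \<Psi>' where "\<Psi>' p = (\<lambda>q. (fst q, F' p q))" for p
  have bl: "bounded_linear (\<Psi>' p)" if "p \<in> W" for p
    unfolding \<Psi>'_def
    by (intro bounded_linear_Pair bounded_linear_fst has_derivative_bounded_linear[OF der[OF that]])
  have \<Psi>'_apply: "blinfun_apply (Blinfun (\<Psi>' p)) = \<Psi>' p" if "p \<in> W" for p
    using bl[OF that] by (rule bounded_linear_Blinfun_apply)
  have der\<Psi>: "(\<Psi> has_derivative blinfun_apply (Blinfun (\<Psi>' p))) (at p)" if "p \<in> W" for p
  proof -
    have "(\<Psi> has_derivative \<Psi>' p) (at p)"
      unfolding \<Psi>_def[abs_def] \<Psi>'_def
      by (intro has_derivative_Pair has_derivative_fst[OF has_derivative_ident] der[OF that])
    then show ?thesis by (simp only: \<Psi>'_apply[OF that])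
  qed
  have cont\<Psi>': "continuous_on W (\<lambda>p. Blinfun (\<Psi>' p))"
    by (rule continuous_on_Blinfun[OF bl]) (auto simp: \<Psi>'_def intro!: continuous_intros cont)
  have "inj (\<Psi>' (M0, x0))"
    unfolding linear_injective_0[OF bounded_linear.linear[OF bl[OF p0]]]
  proof (intro allI impI)
    fix q assume "\<Psi>' (M0, x0) q = 0"
    then have "fst q = 0" and "F' (M0, x0) q = 0"
      by (simp_all add: \<Psi>'_def zero_prod_def)
    moreover from this have "snd q = 0" using nondeg by (metis prod.collapse)
    ultimately show "q = 0" by (simp add: prod_eq_iff)
  qed
  then have "inj (blinfun_apply (Blinfun (\<Psi>' (M0, x0))))" by (simp only: \<Psi>'_apply[OF p0])
  then obtain inverse where inverse: "inverse o\<^sub>L Blinfun (\<Psi>' (M0, x0)) = id_blinfun"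
    by (rule blinfun_left_inverse)
  obtain U V G G' where "open U" "U \<subseteq> W" "(M0, x0) \<in> U" "open V" "\<Psi> (M0, x0) \<in> V"
    and hom: "homeomorphism U V \<Psi> G"
    and derG: "\<And>y. y \<in> V \<Longrightarrow> (G has_derivative G' y) (at y)"
    and G': "\<And>y. y \<in> V \<Longrightarrow> G' y = inv (blinfun_apply (Blinfun (\<Psi>' (G y))))"
    and bij: "\<And>y. y \<in> V \<Longrightarrow> bij (blinfun_apply (Blinfun (\<Psi>' (G y))))"
    by (rule inverse_function_theorem[OF \<open>open W\<close> der\<Psi> cont\<Psi>' p0 inverse]) (assumption, (rule that; assumption))
  have G\<Psi>: "\<And>p. p \<in> U \<Longrightarrow> G (\<Psi> p) = p" and \<Psi>G: "\<And>y. y \<in> V \<Longrightarrow> \<Psi> (G y) = y"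
    and GV: "G ` V = U" and contG: "continuous_on V G"
    using hom unfolding homeomorphism_def by auto
  obtain r where "r > 0" and r: "ball (M0, x0) r \<subseteq> U"
    using \<open>open U\<close> \<open>(M0, x0) \<in> U\<close> unfolding open_contains_ball by blast
  have "\<Psi> (M0, x0) = (M0, 0)" using zero by (simp add: \<Psi>_def)
  then obtain s where "s > 0" and s: "ball (M0, 0) s \<subseteq> V"
    using \<open>open V\<close> \<open>\<Psi> (M0, x0) \<in> V\<close> unfolding open_contains_ball by auto
  define e where "e = min s (r/2)"
  have inV: "(M, 0) \<in> V" if "M \<in> ball M0 e" for M
  proof -
    have "dist (M0, 0) (M, 0) < s" using that by (simp add: dist_Pair_Pair e_def)
    then show ?thesis using s by auto
  qed
  have fstG: "fst (G (M, 0)) = M" if "M \<in> ball M0 e" for M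
    using \<Psi>G[OF inV[OF that]] by (simp add: \<Psi>_def prod_eq_iff)
  define b where "b M = snd (G (M, 0))" for M
  define b' where "b' M = snd (G' (M, 0) (1, 0))" for M
  have GM: "G (M, 0) = (M, b M)" if "M \<in> ball M0 e" for M
    using fstG[OF that] by (simp add: b_def prod_eq_iff)
  show thesis
  proof
    show "e > 0" "r/2 > 0" using \<open>r > 0\<close> \<open>s > 0\<close> by (auto simp: e_def)
    show "b M0 = x0"
      using G\<Psi>[OF \<open>(M0, x0) \<in> U\<close>] zero by (simp add: b_def \<Psi>_def)
    show "F (M, b M) = 0" if "M \<in> ball M0 e" for M
      using \<Psi>G[OF inV[OF that]] GM[OF that] by (simp add: \<Psi>_def)
    show "(b has_vector_derivative b' M) (at M)" if "M \<in> ball M0 e" for M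
      unfolding b_def b'_def using derG[OF inV[OF that]] by (rule has_vector_derivative_snd_slice)
    show "continuous_on (ball M0 e) b'"
    proof -
      have contGM: "continuous_on (ball M0 e) (\<lambda>M. G (M, 0))"
        by (rule continuous_on_compose2[OF contG]) (auto intro!: continuous_intros inV)
      have "G (M, 0) \<in> W" if "M \<in> ball M0 e" for M
        using GV inV[OF that] \<open>U \<subseteq> W\<close> by blast
      then have "continuous_on (ball M0 e) (\<lambda>M. Blinfun (\<Psi>' (G (M, 0))))"
        by (intro continuous_on_compose2[OF cont\<Psi>' contGM]) auto
      then have "continuous_on (ball M0 e) (\<lambda>M. inv (blinfun_apply (Blinfun (\<Psi>' (G (M, 0))))) (1, 0))"
        by (rule continuous_on_inv_blinfun_apply) (simp_all add: bij inV)
      then have "continuous_on (ball M0 e) (\<lambda>M. G' (M, 0) (1, 0))"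
        by (rule continuous_on_eq) (simp add: G' inV)
      then show ?thesis unfolding b'_def by (rule continuous_on_snd)
    qed
    show "x = b M" if M: "M \<in> ball M0 e" and "dist x x0 < r/2" and "F (M, x) = 0" for M x
    proof -
      have "dist (M, x) (M0, x0) < r"
        using M \<open>dist x x0 < r/2\<close>
        by (simp add: dist_Pair_Pair sqrt_sum_squares_half_less e_def dist_commute)
      then have "(M, x) \<in> U" using r by (auto simp: dist_commute)
      moreover have "\<Psi> (M, x) = (M, 0)" using \<open>F (M, x) = 0\<close> by (simp add: \<Psi>_def)
      ultimately have "G (M, 0) = (M, x)" using G\<Psi> by metis
      then show ?thesis using GM[OF M] by simp
    qed
  qed
qed

section \<open>Continuation of solution branches\<close>

definition locally_unique_C1_branch :: "(real \<Rightarrow> 'v::real_normed_vector set) \<Rightarrow> real \<Rightarrow> 'v \<Rightarrow> bool" where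
  "locally_unique_C1_branch P M0 x0 \<longleftrightarrow>
     (\<exists>e>0. \<exists>d>0. \<exists>b b'. b M0 = x0 \<and> continuous_on (ball M0 e) b' \<and>
        (\<forall>M\<in>ball M0 e. b M \<in> P M \<and> (b has_vector_derivative b' M) (at M) \<and>
                       (\<forall>x\<in>P M. dist x x0 < d \<longrightarrow> x = b M)))"

lemma locally_unique_C1_branchE:
  assumes "locally_unique_C1_branch P M0 x0"
  obtains e d b b' where "e > 0" "d > 0" "b M0 = x0" "continuous_on (ball M0 e) b"
    "continuous_on (ball M0 e) b'"
    "\<And>M. M \<in> ball M0 e \<Longrightarrow> b M \<in> P M"
    "\<And>M. M \<in> ball M0 e \<Longrightarrow> (b has_vector_derivative b' M) (at M)"
    "\<And>M x. M \<in> ball M0 e \<Longrightarrow> x \<in> P M \<Longrightarrow> dist x x0 < d \<Longrightarrow> x = b M"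
proof -
  obtain e d b b' where "e > 0" "d > 0" "b M0 = x0" "continuous_on (ball M0 e) b'"
    and branch: "\<forall>M\<in>ball M0 e. b M \<in> P M \<and> (b has_vector_derivative b' M) (at M) \<and>
                       (\<forall>x\<in>P M. dist x x0 < d \<longrightarrow> x = b M)"
    using assms unfolding locally_unique_C1_branch_def by blast
  moreover have "continuous_on (ball M0 e) b"
    using branch by (intro continuous_on_vector_derivative) (auto intro: has_vector_derivative_at_within)
  ultimately show thesis using that by blast
qed

lemma uniqueness_persists:
  fixes P :: "real \<Rightarrow> 'v::real_normed_vector set"
  assumes "compact K" and in_K: "\<And>M. M > a \<Longrightarrow> P M \<subseteq> K"
    and closed_graph: "\<And>Mn xn M x. (\<And>n. Mn n > a) \<Longrightarrow> (\<And>n. xn n \<in> P (Mn n)) \<Longrightarrow>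
                         Mn \<longlonglongrightarrow> M \<Longrightarrow> M > a \<Longrightarrow> xn \<longlonglongrightarrow> x \<Longrightarrow> x \<in> P M"
    and branch: "locally_unique_C1_branch P M0 x0" and "M0 > a"
    and unique: "\<And>x. x \<in> P M0 \<Longrightarrow> x = x0"
  shows "M0 \<in> interior {M. M > a \<and> (\<forall>x\<in>P M. \<forall>y\<in>P M. x = y)}"
proof -
  obtain e d b where "e > 0" "d > 0" "b M0 = x0"
    and near_b: "\<And>M x. M \<in> ball M0 e \<Longrightarrow> x \<in> P M \<Longrightarrow> dist x x0 < d \<Longrightarrow> x = b M"
    using branch by (rule locally_unique_C1_branchE) (rule that; assumption)
  \<comment> \<open>by compactness, all solutions for M near M0 are close to the only solution x0 at M0\<close>
  have "\<exists>r>0. \<forall>M x. dist M M0 < r \<longrightarrow> M > a \<longrightarrow> x \<in> P M \<longrightarrow> dist x x0 < d"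
  proof (rule ccontr)
    assume contra: "\<not> ?thesis"
    have "\<exists>p. dist (fst p) M0 < 1 / real (Suc n) \<and> fst p > a \<and> snd p \<in> P (fst p) \<and> d \<le> dist (snd p) x0"
      for n
    proof -
      have "1 / real (Suc n) > 0" by simp
      then obtain M x where "dist M M0 < 1 / real (Suc n)" "M > a" "x \<in> P M" "d \<le> dist x x0"
        using contra by (meson not_less)
      then show ?thesis by (intro exI[of _ "(M, x)"]) simp
    qed
    then obtain p where p: "\<And>n. dist (fst (p n)) M0 < 1 / real (Suc n) \<and> fst (p n) > a \<and>
                                 snd (p n) \<in> P (fst (p n)) \<and> d \<le> dist (snd (p n)) x0"
      using choice[of "\<lambda>n p. dist (fst p) M0 < 1 / real (Suc n) \<and> fst p > a \<and> snd p \<in> P (fst p) \<and>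
                        d \<le> dist (snd p) x0"] by blast
    define Mn where "Mn n = fst (p n)" for n
    define xn where "xn n = snd (p n)" for n
    have Mn: "\<And>n. dist (Mn n) M0 < 1 / real (Suc n)" "\<And>n. Mn n > a"
      and xn: "\<And>n. xn n \<in> P (Mn n)" "\<And>n. d \<le> dist (xn n) x0"
      using p unfolding Mn_def xn_def by auto
    have "Mn \<longlonglongrightarrow> M0"
      using LIMSEQ_norm_0[of "\<lambda>n. Mn n - M0"] Mn(1) by (simp add: dist_norm LIM_zero_iff)
    have "\<forall>n. xn n \<in> K" using in_K Mn(2) xn(1) by blast
    then obtain l r where "l \<in> K" "strict_mono r" and lim: "(xn \<circ> r) \<longlonglongrightarrow> l"
      by (rule seq_compactE[OF compact_imp_seq_compact[OF \<open>compact K\<close>]])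
    have "l \<in> P M0"
    proof (rule closed_graph[of "Mn \<circ> r" "xn \<circ> r"])
      show "(Mn \<circ> r) \<longlonglongrightarrow> M0"
        using LIMSEQ_subseq_LIMSEQ[OF \<open>Mn \<longlonglongrightarrow> M0\<close> \<open>strict_mono r\<close>] .
    qed (use Mn(2) xn(1) \<open>M0 > a\<close> lim in auto)
    moreover have "d \<le> dist l x0"
    proof (rule tendsto_lowerbound)
      show "((\<lambda>n. dist ((xn \<circ> r) n) x0) \<longlongrightarrow> dist l x0) sequentially"
        using lim by (intro tendsto_intros)
    qed (use xn(2) in auto)
    ultimately show False using unique \<open>d > 0\<close> by force
  qed
  then obtain r where "r > 0" and close: "\<And>M x. dist M M0 < r \<Longrightarrow> M > a \<Longrightarrow> x \<in> P M \<Longrightarrow> dist x x0 < d"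
    by blast
  have "ball M0 (min r (min e (M0 - a))) \<subseteq> {M. M > a \<and> (\<forall>x\<in>P M. \<forall>y\<in>P M. x = y)}"
  proof safe
    fix M assume "M \<in> ball M0 (min r (min e (M0 - a)))"
    then have "M > a" "dist M M0 < r" "M \<in> ball M0 e" by (auto simp: dist_real_def)
    then show "M > a" and "\<And>x y. x \<in> P M \<Longrightarrow> y \<in> P M \<Longrightarrow> x = y"
      using close near_b by metis+
  qed
  moreover have "min r (min e (M0 - a)) > 0" using \<open>r > 0\<close> \<open>e > 0\<close> \<open>M0 > a\<close> by simp
  ultimately show ?thesis unfolding mem_interior by blast
qed

lemma nonuniqueness_persists:
  assumes "locally_unique_C1_branch P M0 x0" "locally_unique_C1_branch P M0 x1" "x0 \<noteq> x1"
  shows "M0 \<in> interior {M. \<exists>x\<in>P M. \<exists>y\<in>P M. x \<noteq> y}"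
proof -
  obtain e0 b0 where "e0 > 0" "b0 M0 = x0" "continuous_on (ball M0 e0) b0" and b0: "\<And>M. M \<in> ball M0 e0 \<Longrightarrow> b0 M \<in> P M"
    using assms(1) by (rule locally_unique_C1_branchE) (rule that; assumption)
  obtain e1 b1 where "e1 > 0" "b1 M0 = x1" "continuous_on (ball M0 e1) b1" and b1: "\<And>M. M \<in> ball M0 e1 \<Longrightarrow> b1 M \<in> P M"
    using assms(2) by (rule locally_unique_C1_branchE) (rule that; assumption)
  have "continuous_on (ball M0 (min e0 e1)) (\<lambda>M. b0 M - b1 M)"
    using \<open>continuous_on (ball M0 e0) b0\<close> \<open>continuous_on (ball M0 e1) b1\<close>
    by (intro continuous_intros) (auto elim: continuous_on_subset)
  then have "isCont (\<lambda>M. b0 M - b1 M) M0"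
    using \<open>e0 > 0\<close> \<open>e1 > 0\<close> by (simp add: continuous_on_eq_continuous_at)
  then obtain r where "r > 0" and r: "\<And>M. dist M0 M < r \<Longrightarrow> b0 M - b1 M \<noteq> 0"
    using continuous_at_avoid[of M0 "\<lambda>M. b0 M - b1 M" 0] \<open>b0 M0 = x0\<close> \<open>b1 M0 = x1\<close> \<open>x0 \<noteq> x1\<close> by auto
  have "ball M0 (min r (min e0 e1)) \<subseteq> {M. \<exists>x\<in>P M. \<exists>y\<in>P M. x \<noteq> y}"
    using b0 b1 r by fastforce
  moreover have "min r (min e0 e1) > 0" using \<open>r > 0\<close> \<open>e0 > 0\<close> \<open>e1 > 0\<close> by simp
  ultimately show ?thesis unfolding mem_interior by blast
qed

lemma continuation_of_uniqueness:
  fixes P :: "real \<Rightarrow> 'v::real_normed_vector set"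
  assumes nonempty: "\<And>M. M > a \<Longrightarrow> P M \<noteq> {}"
    and unique_somewhere: "\<exists>M>a. \<forall>x\<in>P M. \<forall>y\<in>P M. x = y"
    and K: "compact K" "\<And>M. M > a \<Longrightarrow> P M \<subseteq> K"
    and closed_graph: "\<And>Mn xn M x. (\<And>n. Mn n > a) \<Longrightarrow> (\<And>n. xn n \<in> P (Mn n)) \<Longrightarrow>
                         Mn \<longlonglongrightarrow> M \<Longrightarrow> M > a \<Longrightarrow> xn \<longlonglongrightarrow> x \<Longrightarrow> x \<in> P M"
    and branch: "\<And>M x. M > a \<Longrightarrow> x \<in> P M \<Longrightarrow> locally_unique_C1_branch P M x"
  shows "\<forall>M>a. \<exists>!x. x \<in> P M"
proof -
  define T where "T = {M. M > a \<and> (\<forall>x\<in>P M. \<forall>y\<in>P M. x = y)}"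
  define N where "N = {M. \<exists>x\<in>P M. \<exists>y\<in>P M. x \<noteq> y}"
  have cover: "{a<..} \<subseteq> interior T \<union> interior N"
  proof
    fix M assume "M \<in> {a<..}"
    then have "M > a" by simp
    then obtain x where "x \<in> P M" using nonempty by blast
    show "M \<in> interior T \<union> interior N"
    proof (cases "\<forall>y\<in>P M. y = x")
      case True
      have "M \<in> interior T"
        unfolding T_def
      proof (rule uniqueness_persists[OF K closed_graph])
        show "locally_unique_C1_branch P M x" using \<open>M > a\<close> \<open>x \<in> P M\<close> by (rule branch)
      qed (use True \<open>M > a\<close> in auto)
      then show ?thesis ..
    next
      case False
      then obtain y where "y \<in> P M" "x \<noteq> y" by blast
      have "M \<in> interior N"
        unfolding N_def
        by (rule nonuniqueness_persists[OF branch branch \<open>x \<noteq> y\<close>]) (fact | rule \<open>M > a\<close>)+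
      then show ?thesis ..
    qed
  qed
  have "T \<inter> N = {}" unfolding T_def N_def by blast
  then have "interior T \<inter> interior N \<inter> {a<..} = {}"
    using interior_subset[of T] interior_subset[of N] by blast
  then have "interior T \<inter> {a<..} = {} \<or> interior N \<inter> {a<..} = {}"
    by (rule connectedD[OF connected_Ioi open_interior open_interior _ cover])
  moreover obtain M1 where "M1 > a" "M1 \<in> T" using unique_somewhere unfolding T_def by blast
  then have "M1 \<in> interior T \<inter> {a<..}" using cover \<open>T \<inter> N = {}\<close> interior_subset[of N] by blast
  ultimately have "{a<..} \<subseteq> T" using cover interior_subset[of T] by blast
  show ?thesis
  proof (intro allI impI)
    fix M :: real assume "M > a"
    then obtain x where "x \<in> P M" using nonempty by blast
    moreover have "\<forall>y\<in>P M. \<forall>z\<in>P M. y = z" using \<open>{a<..} \<subseteq> T\<close> \<open>M > a\<close> unfolding T_def by blast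
    ultimately show "\<exists>!x. x \<in> P M" by blast
  qed
qed

lemma continuation_C1:
  fixes P :: "real \<Rightarrow> 'v::real_normed_vector set"
  assumes unique: "\<forall>M>a. \<exists>!x. x \<in> P M"
    and branch: "\<And>M x. M > a \<Longrightarrow> x \<in> P M \<Longrightarrow> locally_unique_C1_branch P M x"
  shows "(\<lambda>M. THE x. x \<in> P M) C1_differentiable_on {a<..}"
proof -
  define F where "F M = (THE x. x \<in> P M)" for M
  have F: "F M \<in> P M" if "M > a" for M
    unfolding F_def by (rule theI'[OF unique[rule_format, OF that]])
  have local_C1: "\<forall>M0>a. \<exists>e>0. \<exists>b'. continuous_on (ball M0 e) b' \<and>
                    (\<forall>M\<in>ball M0 e. (F has_vector_derivative b' M) (at M))"
  proof (intro allI impI)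
    fix M0 :: real assume "M0 > a"
    obtain e b b' where "e > 0" "continuous_on (ball M0 e) b'"
      and b: "\<And>M. M \<in> ball M0 e \<Longrightarrow> b M \<in> P M"
      and b': "\<And>M. M \<in> ball M0 e \<Longrightarrow> (b has_vector_derivative b' M) (at M)"
      using branch[OF \<open>M0 > a\<close> F[OF \<open>M0 > a\<close>]] by (rule locally_unique_C1_branchE) (rule that; assumption)
    define e' where "e' = min e (M0 - a)"
    have ball: "ball M0 e' \<subseteq> ball M0 e \<inter> {a<..}" by (auto simp: e'_def dist_real_def)
    have bF: "b M = F M" if "M \<in> ball M0 e'" for M
    proof -
      have "M > a" "b M \<in> P M" using ball that b by auto
      then show ?thesis unfolding F_def by (intro the1_equality[symmetric] unique[rule_format])
    qed
    have "(F has_vector_derivative b' M) (at M)" if M: "M \<in> ball M0 e'" for M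
    proof (rule has_vector_derivative_transform_within_open[OF _ open_ball M bF])
      show "(b has_vector_derivative b' M) (at M)" using M ball b' by blast
    qed
    moreover have "e' > 0" using \<open>e > 0\<close> \<open>M0 > a\<close> by (simp add: e'_def)
    moreover have "continuous_on (ball M0 e') b'"
      using ball by (intro continuous_on_subset[OF \<open>continuous_on (ball M0 e) b'\<close>]) blast
    ultimately show "\<exists>e>0. \<exists>b'. continuous_on (ball M0 e) b' \<and>
                    (\<forall>M\<in>ball M0 e. (F has_vector_derivative b' M) (at M))"
      by (intro exI[of _ e'] exI[of _ b'] conjI ballI) auto
  qed
  have "F differentiable at M \<and> isCont (\<lambda>M. vector_derivative F (at M)) M" if "M > a" for M
  proof -
    obtain e b' where "e > 0" "continuous_on (ball M e) b'"
      and b': "\<forall>z\<in>ball M e. (F has_vector_derivative b' z) (at z)"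
      using local_C1 \<open>M > a\<close> by blast
    have "F differentiable at M" using b' \<open>e > 0\<close> by (auto intro: differentiableI_vector)
    moreover have "continuous_on (ball M e) (\<lambda>z. vector_derivative F (at z))"
    proof (rule continuous_on_eq[OF \<open>continuous_on (ball M e) b'\<close>])
      show "b' z = vector_derivative F (at z)" if "z \<in> ball M e" for z
        using b' that by (intro vector_derivative_at[symmetric]) blast
    qed
    then have "isCont (\<lambda>z. vector_derivative F (at z)) M"
      using \<open>e > 0\<close> by (simp add: continuous_on_eq_continuous_at)
    ultimately show ?thesis ..
  qed
  then show ?thesis
    unfolding C1_differentiable_on_eq F_def[symmetric] by (auto intro: continuous_at_imp_continuous_on)
qed
section \<open>The replicator-mutator dynamics\<close>

locale replicator_mutator =
  fixes pop :: "'s::{finite,linorder} \<Rightarrow> 'i"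
    and f :: "'s \<Rightarrow> (real,'s) vec \<Rightarrow> real"
    and f' :: "'s \<Rightarrow> (real,'s) vec \<Rightarrow> (real,'s) vec \<Rightarrow>\<^sub>L real"
    and U :: "((real,'s) vec) set"
    and c :: "(real,'s) vec"
  assumes surj_pop: "surj pop"
    and open_U: "open U" and simplex_subset_U: "pop_simplex pop \<subseteq> U"
    and f_derivative: "\<And>s x. x \<in> U \<Longrightarrow> (f s has_derivative blinfun_apply (f' s x)) (at x)"
    and f'_continuous: "\<And>s. continuous_on U (f' s)"
    and c_interior: "c \<in> int_simplex pop"
begin

abbreviation "\<Delta> \<equiv> pop_simplex pop"
abbreviation "fibre i \<equiv> {t. pop t = i}"

lemma pop_last_type: "pop (last_type pop i) = i"
proof -
  obtain s where "pop s = i" using surj_pop by (metis surjD)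
  then have "fibre i \<noteq> {}" by blast
  then have "last_type pop i \<in> fibre i" unfolding last_type_def by (intro Max_in) auto
  then show ?thesis by simp
qed

lemma dropped_last_type: "dropped pop (last_type pop i)"
  unfolding dropped_def using pop_last_type by simp

lemma dropped_unique: "dropped pop s \<Longrightarrow> dropped pop t \<Longrightarrow> pop s = pop t \<Longrightarrow> s = t"
  unfolding dropped_def by simp

lemma fibre_sum_split:
  "(\<Sum>t\<in>fibre (pop s). x$t) = x$s + (\<Sum>t\<in>{t. pop t = pop s \<and> t \<noteq> s}. x$t)"
proof -
  have "{t. pop t = pop s \<and> t \<noteq> s} = fibre (pop s) - {s}" by blast
  then show ?thesis by (simp add: sum.remove)
qed

lemma simplex_nonneg: "x \<in> \<Delta> \<Longrightarrow> 0 \<le> x$s"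
  by (simp add: pop_simplex_def)

lemma simplex_fibre_sum: "x \<in> \<Delta> \<Longrightarrow> (\<Sum>t\<in>fibre i. x$t) = 1"
  by (simp add: pop_simplex_def)

lemma simplex_le_1: assumes "x \<in> \<Delta>" shows "x$s \<le> 1"
proof -
  have "x$s \<le> (\<Sum>t\<in>fibre (pop s). x$t)"
    using simplex_nonneg[OF assms] by (intro member_le_sum) auto
  then show ?thesis using simplex_fibre_sum[OF assms] by simp
qed

lemma c_simplex: "c \<in> \<Delta>" and c_pos: "0 < c$s"
  using c_interior by (auto simp: int_simplex_def)

lemma compact_simplex: "compact \<Delta>"
proof -
  have "closed \<Delta>"
    unfolding pop_simplex_def
    by (intro closed_Collect_conj closed_Collect_all closed_Collect_le closed_Collect_eq continuous_intros)
  moreover have "\<Delta> \<subseteq> cbox 0 1"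
    using simplex_nonneg simplex_le_1 by (auto simp: mem_box_cart)
  then have "bounded \<Delta>" by (rule bounded_subset[OF bounded_cbox])
  ultimately show ?thesis by (simp add: compact_eq_bounded_closed)
qed

lemma convex_simplex: "convex \<Delta>"
  unfolding convex_def
proof (intro ballI allI impI)
  fix x y :: "(real,'s) vec" and u v :: real
  assume "x \<in> \<Delta>" "y \<in> \<Delta>" "0 \<le> u" "0 \<le> v" "u + v = 1"
  then have "0 \<le> (u *\<^sub>R x + v *\<^sub>R y) $ s" for s
    using simplex_nonneg by simp
  moreover have "(\<Sum>t\<in>fibre i. (u *\<^sub>R x + v *\<^sub>R y) $ t) = 1" for i
    using simplex_fibre_sum[OF \<open>x \<in> \<Delta>\<close>] simplex_fibre_sum[OF \<open>y \<in> \<Delta>\<close>] \<open>u + v = 1\<close>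
    by (simp add: sum.distrib flip: sum_distrib_left)
  ultimately show "u *\<^sub>R x + v *\<^sub>R y \<in> \<Delta>" by (simp add: pop_simplex_def)
qed

lemma continuous_on_f: "continuous_on U (f s)"
  using f_derivative by (intro has_derivative_continuous_on) (auto intro: has_derivative_at_withinI)

lemma continuous_on_repl: "continuous_on U (repl pop f)"
  unfolding repl_def fbar_def
  by (intro continuous_on_vec_lambda continuous_intros continuous_on_f)

lemma fibre_sum_repl:
  assumes "(\<Sum>t\<in>fibre i. x$t) = 1" shows "(\<Sum>t\<in>fibre i. repl pop f x $ t) = 0"
proof -
  have "(\<Sum>t\<in>fibre i. repl pop f x $ t) = (\<Sum>t\<in>fibre i. x$t * f t x) - (\<Sum>t\<in>fibre i. x$t) * fbar pop f i x"
    by (simp add: repl_def right_diff_distrib sum_subtractf sum_distrib_right)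
  also have "\<dots> = 0" using assms by (simp add: fbar_def)
  finally show ?thesis .
qed

definition repl_deriv :: "(real,'s) vec \<Rightarrow> (real,'s) vec \<Rightarrow> (real,'s) vec" where
  "repl_deriv y h = (\<chi> s. h$s * (f s y - fbar pop f (pop s) y) +
       y$s * (f' s y h - (\<Sum>t\<in>fibre (pop s). h$t * f t y + y$t * f' t y h)))"

lemma repl_has_derivative:
  assumes "y \<in> U" shows "(repl pop f has_derivative repl_deriv y) (at y)"
proof -
  have prod: "((\<lambda>x. x$t * f t x) has_derivative (\<lambda>h. h$t * f t y + y$t * f' t y h)) (at y)" for t
    using has_derivative_mult[OF has_derivative_vec_nth[OF has_derivative_ident] f_derivative[OF assms]]
    by (simp add: algebra_simps)
  have "((\<lambda>x. x$s * (f s x - fbar pop f (pop s) x)) has_derivative (\<lambda>h. repl_deriv y h $ s)) (at y)" for s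
  proof -
    have "(fbar pop f (pop s) has_derivative
            (\<lambda>h. \<Sum>t\<in>fibre (pop s). h$t * f t y + y$t * f' t y h)) (at y)"
      unfolding fbar_def[abs_def] by (intro has_derivative_sum prod)
    from has_derivative_mult[OF has_derivative_vec_nth[OF has_derivative_ident]
        has_derivative_diff[OF f_derivative[OF assms] this]]
    show ?thesis by (simp add: repl_deriv_def algebra_simps)
  qed
  from has_derivative_vec_lambda[where g="\<lambda>s x. x$s * (f s x - fbar pop f (pop s) x)"
      and g'="\<lambda>s h. repl_deriv y h $ s", OF this]
  show ?thesis unfolding repl_def by (simp add: vec_lambda_eta)
qed

lemma continuous_on_repl_deriv: "continuous_on U (\<lambda>y. repl_deriv y h)"
  unfolding repl_deriv_def fbar_def
  by (intro continuous_on_vec_lambda continuous_intros continuous_on_f f'_continuous)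

definition equilibria :: "real \<Rightarrow> (real,'s) vec set" where
  "equilibria M = {x \<in> \<Delta>. repl_mut pop f M c x = 0}"

lemma equilibria_simplex: "x \<in> equilibria M \<Longrightarrow> x \<in> \<Delta>"
  by (simp add: equilibria_def)

lemma f_bounded: "\<exists>F0. \<forall>s. \<forall>x\<in>\<Delta>. \<bar>f s x\<bar> \<le> F0"
proof -
  have "continuous_on \<Delta> (\<lambda>x. \<chi> s. f s x)"
    by (intro continuous_on_vec_lambda continuous_on_subset[OF continuous_on_f simplex_subset_U])
  then obtain F0 where F0: "\<And>x. x \<in> \<Delta> \<Longrightarrow> norm (\<chi> s. f s x) \<le> F0"
    using continuous_on_compact_bound[OF compact_simplex] by blast
  have "\<bar>f s x\<bar> \<le> F0" if "x \<in> \<Delta>" for s x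
    using component_le_norm_cart[of "\<chi> s. f s x" s] F0[OF that] by simp
  then show ?thesis by blast
qed

lemma abs_fbar_le:
  assumes "x \<in> \<Delta>" and F0: "\<And>s. \<bar>f s x\<bar> \<le> F0" shows "\<bar>fbar pop f i x\<bar> \<le> F0"
proof -
  have "\<bar>fbar pop f i x\<bar> \<le> (\<Sum>t\<in>fibre i. \<bar>x$t * f t x\<bar>)" unfolding fbar_def by (rule sum_abs)
  also have "\<dots> \<le> (\<Sum>t\<in>fibre i. x$t * F0)"
    using simplex_nonneg[OF assms(1)] F0 by (intro sum_mono) (simp add: abs_mult mult_left_mono)
  also have "\<dots> = F0" using simplex_fibre_sum[OF assms(1)] by (simp flip: sum_distrib_right)
  finally show ?thesis .
qed

lemma equilibria_nonempty:
  assumes "M > 0" shows "equilibria M \<noteq> {}"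
proof -
  obtain F0 where F0: "\<And>s x. x \<in> \<Delta> \<Longrightarrow> \<bar>f s x\<bar> \<le> F0" using f_bounded by blast
  \<comment> \<open>equilibria are the fixed points of T; the shift K keeps numerators and denominators positive\<close>
  define K where "K = F0 + 1"
  define den where "den i x = fbar pop f i x + K + M" for i x
  define T where "T x = (\<chi> s. (x$s * (f s x + K) + M * c$s) / den (pop s) x)" for x
  have den_pos: "den i x > 0" if "x \<in> \<Delta>" for i x
    using abs_fbar_le[OF that F0[OF that], of i] \<open>M > 0\<close> by (simp add: den_def K_def abs_le_iff)
  have "\<forall>x\<in>\<Delta>. den (pop s) x \<noteq> 0" for s using den_pos by (metis less_irrefl)
  then have "continuous_on \<Delta> T"
    unfolding T_def den_def fbar_def
    by (intro continuous_on_vec_lambda continuous_intros continuous_on_subset[OF continuous_on_f simplex_subset_U])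
  moreover have "T x \<in> \<Delta>" if "x \<in> \<Delta>" for x
  proof -
    have "f s x + K \<ge> 0" for s using F0[OF that, of s] by (simp add: K_def abs_le_iff)
    then have "0 \<le> T x $ s" for s
      using simplex_nonneg[OF that, of s] c_pos[of s] \<open>M > 0\<close> den_pos[OF that, of "pop s"]
      by (simp add: T_def)
    moreover have "(\<Sum>t\<in>fibre i. T x $ t) = 1" for i
    proof -
      have "(\<Sum>t\<in>fibre i. T x $ t) = (\<Sum>t\<in>fibre i. x$t * f t x + K * x$t + M * c$t) / den i x"
        by (simp add: T_def sum_divide_distrib algebra_simps)
      also have "(\<Sum>t\<in>fibre i. x$t * f t x + K * x$t + M * c$t) = den i x"
        using simplex_fibre_sum[OF that, of i] simplex_fibre_sum[OF c_simplex, of i]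
        by (simp add: den_def fbar_def sum.distrib flip: sum_distrib_left)
      finally show ?thesis using den_pos[OF that, of i] by simp
    qed
    ultimately show ?thesis by (simp add: pop_simplex_def)
  qed
  ultimately obtain x where "x \<in> \<Delta>" "T x = x"
    using brouwer[OF compact_simplex convex_simplex] c_simplex by blast
  have "repl_mut pop f M c x $ s = 0" for s
  proof -
    have "x$s = T x $ s" using \<open>T x = x\<close> by simp
    then have "x$s * den (pop s) x = x$s * (f s x + K) + M * c$s"
      using den_pos[OF \<open>x \<in> \<Delta>\<close>, of "pop s"] by (simp add: T_def field_simps)
    then show ?thesis by (simp add: repl_mut_def repl_def den_def algebra_simps)
  qed
  then show ?thesis using \<open>x \<in> \<Delta>\<close> by (auto simp: equilibria_def vec_eq_iff)
qed

lemma equilibria_pos: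
  assumes "M > 0" and x: "x \<in> equilibria M" shows "0 < x$s"
proof -
  have "x$s \<noteq> 0"
  proof
    assume "x$s = 0"
    moreover have "repl_mut pop f M c x $ s = 0" using x by (simp add: equilibria_def)
    ultimately show False using \<open>M > 0\<close> c_pos[of s] by (simp add: repl_mut_def repl_def)
  qed
  then show ?thesis using simplex_nonneg[OF equilibria_simplex[OF x], of s] by simp
qed

lemma equilibria_closed_graph:
  assumes "\<And>n. xn n \<in> equilibria (Mn n)" "Mn \<longlonglongrightarrow> M" "xn \<longlonglongrightarrow> x"
  shows "x \<in> equilibria M"
proof -
  have xn: "xn n \<in> \<Delta>" for n using assms(1) equilibria_simplex by blast
  then have "x \<in> \<Delta>"
    using closed_sequentially[OF compact_imp_closed[OF compact_simplex] _ assms(3)] by blast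
  have "(\<lambda>n. repl pop f (xn n)) \<longlonglongrightarrow> repl pop f x"
    using continuous_on_tendsto_compose[OF continuous_on_subset[OF continuous_on_repl simplex_subset_U]
        assms(3) \<open>x \<in> \<Delta>\<close>] xn by simp
  then have "(\<lambda>n. repl_mut pop f (Mn n) c (xn n)) \<longlonglongrightarrow> repl_mut pop f M c x"
    unfolding repl_mut_def using assms(2,3) by (intro tendsto_intros)
  moreover have "repl_mut pop f (Mn n) c (xn n) = 0" for n
    using assms(1) by (simp add: equilibria_def)
  ultimately have "repl_mut pop f M c x = 0" by (simp add: LIMSEQ_const_iff)
  then show ?thesis using \<open>x \<in> \<Delta>\<close> by (simp add: equilibria_def)
qed

lemma lipschitz_on_repl: obtains L where "L-lipschitz_on \<Delta> (repl pop f)"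
proof (rule C1_imp_lipschitz_on_compact_convex[OF compact_simplex convex_simplex])
  show "(repl pop f has_derivative repl_deriv x) (at x within \<Delta>)" if "x \<in> \<Delta>" for x
    using repl_has_derivative simplex_subset_U that by (blast intro: has_derivative_at_withinI)
  show "continuous_on \<Delta> (\<lambda>x. repl_deriv x h)" for h
    using continuous_on_repl_deriv simplex_subset_U by (rule continuous_on_subset)
qed

lemma equilibria_unique_large: "\<exists>L. \<forall>M>L. \<forall>x\<in>equilibria M. \<forall>y\<in>equilibria M. x = y"
proof -
  obtain L where L: "L-lipschitz_on \<Delta> (repl pop f)" by (rule lipschitz_on_repl)
  have "x = y" if "M > L" and x: "x \<in> equilibria M" and y: "y \<in> equilibria M" for M x y
  proof -
    have "repl pop f x = M *\<^sub>R (x - c)" "repl pop f y = M *\<^sub>R (y - c)"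
      using x y by (simp_all add: equilibria_def repl_mut_def scaleR_diff_right add_eq_0_iff2 flip: diff_eq_eq)
    then have "repl pop f x - repl pop f y = M *\<^sub>R (x - y)" by (simp add: scaleR_diff_right)
    then have "M * norm (x - y) \<le> L * norm (x - y)"
      using lipschitz_on_normD[OF L equilibria_simplex[OF x] equilibria_simplex[OF y]]
        lipschitz_on_nonneg[OF L] \<open>M > L\<close> by simp
    then have "(M - L) * norm (x - y) \<le> 0" by (simp add: left_diff_distrib)
    then show ?thesis using \<open>M > L\<close> by (simp add: mult_le_0_iff)
  qed
  then show ?thesis by blast
qed

definition embed_lin :: "(real,'s) vec \<Rightarrow> (real,'s) vec" where
  "embed_lin h = (\<chi> s. if dropped pop s then - (\<Sum>t\<in>{t. pop t = pop s \<and> t \<noteq> s}. h$t) else h$s)"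

definition reduced_deriv :: "(real,'s) vec \<Rightarrow> (real,'s) vec \<Rightarrow> (real,'s) vec" where
  "reduced_deriv x h = (\<chi> s. if dropped pop s then 0 else repl_deriv x (embed_lin h) $ s)"

lemma embed_simplex: assumes "x \<in> \<Delta>" shows "embed pop x = x"
proof -
  have "embed pop x $ s = x $ s" for s
    using fibre_sum_split[where s=s and x=x] simplex_fibre_sum[OF assms, of "pop s"] by (simp add: embed_def)
  then show ?thesis by (simp add: vec_eq_iff)
qed

lemma embed_has_derivative: "(embed pop has_derivative embed_lin) (at x)"
proof -
  have "((\<lambda>y. embed pop y $ s) has_derivative (\<lambda>h. embed_lin h $ s)) (at x)" for s
  proof (cases "dropped pop s")
    case True
    have "((\<lambda>y. 1 - (\<Sum>t\<in>{t. pop t = pop s \<and> t \<noteq> s}. y$t)) has_derivative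
           (\<lambda>h. 0 - (\<Sum>t\<in>{t. pop t = pop s \<and> t \<noteq> s}. h$t))) (at x)"
      by (intro derivative_intros)
    then show ?thesis using True by (simp add: embed_def embed_lin_def)
  next
    case False
    then show ?thesis
      using has_derivative_vec_nth[OF has_derivative_ident, where F="at x" and i=s]
      by (simp add: embed_def embed_lin_def)
  qed
  from has_derivative_vec_lambda[where g="\<lambda>s y. embed pop y $ s" and g'="\<lambda>s h. embed_lin h $ s", OF this]
  show ?thesis by (simp add: vec_lambda_eta)
qed

lemma reduced_has_derivative:
  assumes "x \<in> \<Delta>" shows "(reduced pop f has_derivative reduced_deriv x) (at x)"
proof -
  have "embed pop x \<in> U" using embed_simplex[OF assms] assms simplex_subset_U by auto
  from has_derivative_compose[OF embed_has_derivative repl_has_derivative[OF this]]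
  have "((\<lambda>y. repl pop f (embed pop y)) has_derivative (\<lambda>h. repl_deriv x (embed_lin h))) (at x)"
    by (simp add: embed_simplex[OF assms])
  then have "((\<lambda>y. if dropped pop s then 0 else repl pop f (embed pop y) $ s) has_derivative
               (\<lambda>h. reduced_deriv x h $ s)) (at x)" for s
    by (cases "dropped pop s") (auto simp: reduced_deriv_def intro: has_derivative_vec_nth)
  from has_derivative_vec_lambda[where g="\<lambda>s y. if dropped pop s then 0 else repl pop f (embed pop y) $ s"
      and g'="\<lambda>s h. reduced_deriv x h $ s", OF this]
  show ?thesis by (simp add: reduced_def[abs_def] vec_lambda_eta)
qed

lemma reduced_jacobian_mult:
  assumes "x \<in> \<Delta>" shows "reduced_jacobian pop f x *v v = reduced_deriv x v"
proof -
  have "linear (reduced_deriv x)"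
    using reduced_has_derivative[OF assms] by (rule has_derivative_linear)
  then show ?thesis
    unfolding reduced_jacobian_def frechet_derivative_at[OF reduced_has_derivative[OF assms], symmetric]
    by (simp add: matrix_works linear_linear)
qed

lemma reduced_jacobian_entry:
  assumes "x \<in> \<Delta>" shows "reduced_jacobian pop f x $ i $ j = reduced_deriv x (axis j 1) $ i"
  using arg_cong[OF reduced_jacobian_mult[OF assms, of "axis j 1"], of "\<lambda>v. v $ i"]
  by (simp add: matrix_vector_mult_basis column_def)

lemma continuous_on_reduced_deriv: "continuous_on U (\<lambda>x. reduced_deriv x h)"
  unfolding reduced_deriv_def
proof (rule continuous_on_vec_lambda)
  show "continuous_on U (\<lambda>x. if dropped pop s then 0 else repl_deriv x (embed_lin h) $ s)" for s
    by (cases "dropped pop s") (simp_all add: continuous_on_component continuous_on_repl_deriv)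
qed

lemma bdd_above_reduced_spectrum:
  "bdd_above {Re lam | lam x. x \<in> \<Delta> \<and> reduced_eigenvalue pop f x lam}"
proof -
  define g where "g x = (\<Sum>i\<in>UNIV. \<Sum>j\<in>UNIV. \<bar>reduced_deriv x (axis j 1) $ i\<bar>)" for x
  have "continuous_on \<Delta> g"
    unfolding g_def using simplex_subset_U
    by (intro continuous_intros continuous_on_subset[OF continuous_on_reduced_deriv])
  then obtain G where G: "\<And>x. x \<in> \<Delta> \<Longrightarrow> norm (g x) \<le> G"
    using continuous_on_compact_bound[OF compact_simplex] by blast
  have "Re lam \<le> G" if "x \<in> \<Delta>" and "reduced_eigenvalue pop f x lam" for x lam
  proof -
    obtain v where "v \<noteq> 0"
      and "(\<chi> i j. complex_of_real (reduced_jacobian pop f x $ i $ j)) *v v = lam *s v"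
      using \<open>reduced_eigenvalue pop f x lam\<close> unfolding reduced_eigenvalue_def by blast
    then obtain i where "cmod lam \<le> (\<Sum>j\<in>UNIV. \<bar>reduced_jacobian pop f x $ i $ j\<bar>)"
      by (rule cmod_eigenvalue_le_row_sum)
    also have "\<dots> \<le> g x"
      unfolding g_def reduced_jacobian_entry[OF \<open>x \<in> \<Delta>\<close>]
      by (rule member_le_sum[where f="\<lambda>i. \<Sum>j\<in>UNIV. \<bar>reduced_deriv x (axis j 1) $ i\<bar>"])
         (auto intro: sum_nonneg)
    also have "\<dots> \<le> G" using G[OF \<open>x \<in> \<Delta>\<close>] by simp
    finally show ?thesis using complex_Re_le_cmod[of lam] by linarith
  qed
  then show ?thesis unfolding bdd_above_def by blast
qed

lemma Re_reduced_eigenvalue_le_Mlow: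
  assumes "x \<in> \<Delta>" and "reduced_eigenvalue pop f x lam" shows "Re lam \<le> Mlow pop f"
proof -
  let ?E = "{Re lam | lam x. x \<in> \<Delta> \<and> reduced_eigenvalue pop f x lam}"
  have "Re lam \<in> ?E" using assms by blast
  then have "Re lam \<le> Sup ?E" using bdd_above_reduced_spectrum by (rule cSup_upper)
  then show ?thesis using \<open>Re lam \<in> ?E\<close> unfolding Mlow_def Let_def by auto
qed

lemma Mlow_nonneg: "Mlow pop f \<ge> 0"
  by (simp add: Mlow_def Let_def)

lemma no_reduced_eigenvector_above_Mlow:
  assumes "x \<in> \<Delta>" and "M > Mlow pop f" and "\<And>s. dropped pop s \<Longrightarrow> v$s = 0"
    and "reduced_deriv x v = M *\<^sub>R v"
  shows "v = 0"
proof (rule ccontr)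
  assume "v \<noteq> 0"
  define w where "w = (\<chi> s. complex_of_real (v$s))"
  have "(\<chi> i j. complex_of_real (reduced_jacobian pop f x $ i $ j)) *v w = complex_of_real M *s w"
    using arg_cong[OF \<open>reduced_deriv x v = M *\<^sub>R v\<close>, of "\<lambda>u. (\<chi> i. complex_of_real (u $ i))"]
    unfolding reduced_jacobian_mult[OF \<open>x \<in> \<Delta>\<close>, symmetric]
    by (simp add: matrix_vector_mult_def vector_scalar_mult_def w_def vec_eq_iff)
  moreover have "w \<noteq> 0" using \<open>v \<noteq> 0\<close> by (simp add: w_def vec_eq_iff)
  ultimately have "reduced_eigenvalue pop f x (complex_of_real M)"
    using assms(3) unfolding reduced_eigenvalue_def w_def by auto
  then show False using Re_reduced_eigenvalue_le_Mlow[OF \<open>x \<in> \<Delta>\<close>] \<open>M > Mlow pop f\<close> by fastforce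
qed

text \<open>The equation of each dropped type is replaced by the constraint that its fibre sums to 1.
  Nothing is lost: on the simplex repl_mut sums to 0 over every fibre, so the dropped equation
  follows from the others.\<close>

definition eq_map :: "real \<times> (real,'s) vec \<Rightarrow> (real,'s) vec" where
  "eq_map p = (\<chi> s. if dropped pop s then (\<Sum>t\<in>fibre (pop s). snd p $ t) - 1
                     else repl pop f (snd p) $ s - fst p * (snd p $ s - c$s))"

definition eq_map_deriv :: "real \<times> (real,'s) vec \<Rightarrow> real \<times> (real,'s) vec \<Rightarrow> (real,'s) vec" where
  "eq_map_deriv p q = (\<chi> s. if dropped pop s then (\<Sum>t\<in>fibre (pop s). snd q $ t)
       else repl_deriv (snd p) (snd q) $ s - (fst q * (snd p $ s - c$s) + fst p * snd q $ s))"

lemma eq_map_has_derivative: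
  assumes "snd p \<in> U" shows "(eq_map has_derivative eq_map_deriv p) (at p)"
proof -
  have snd_nth: "((\<lambda>p. snd p $ t) has_derivative (\<lambda>q. snd q $ t)) (at p)" for t
    by (intro has_derivative_vec_nth has_derivative_snd has_derivative_ident)
  have "((\<lambda>p. eq_map p $ s) has_derivative (\<lambda>q. eq_map_deriv p q $ s)) (at p)" for s
  proof (cases "dropped pop s")
    case True
    have "((\<lambda>p. (\<Sum>t\<in>fibre (pop s). snd p $ t) - 1) has_derivative
           (\<lambda>q. (\<Sum>t\<in>fibre (pop s). snd q $ t) - 0)) (at p)"
      by (intro has_derivative_diff has_derivative_sum has_derivative_const snd_nth)
    then show ?thesis using True by (simp add: eq_map_def eq_map_deriv_def)
  next
    case False
    have "((\<lambda>p. repl pop f (snd p) $ s) has_derivative (\<lambda>q. repl_deriv (snd p) (snd q) $ s)) (at p)"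
      by (intro has_derivative_vec_nth has_derivative_compose[OF has_derivative_snd[OF has_derivative_ident]]
          repl_has_derivative assms)
    moreover have "((\<lambda>p. fst p * (snd p $ s - c$s)) has_derivative
                    (\<lambda>q. fst p * (snd q $ s - 0) + fst q * (snd p $ s - c$s))) (at p)"
      by (intro has_derivative_mult has_derivative_fst[OF has_derivative_ident]
          has_derivative_diff snd_nth has_derivative_const)
    ultimately have "((\<lambda>p. repl pop f (snd p) $ s - fst p * (snd p $ s - c$s)) has_derivative
        (\<lambda>q. repl_deriv (snd p) (snd q) $ s - (fst p * (snd q $ s - 0) + fst q * (snd p $ s - c$s)))) (at p)"
      by (rule has_derivative_diff)
    then show ?thesis using False by (simp add: eq_map_def eq_map_deriv_def algebra_simps)
  qed
  from has_derivative_vec_lambda[where g="\<lambda>s p. eq_map p $ s" and g'="\<lambda>s q. eq_map_deriv p q $ s", OF this]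
  show ?thesis by (simp add: vec_lambda_eta)
qed

lemma continuous_on_eq_map_deriv: "continuous_on (UNIV \<times> U) (\<lambda>p. eq_map_deriv p q)"
  unfolding eq_map_deriv_def
proof (rule continuous_on_vec_lambda)
  have "continuous_on (UNIV \<times> U) (\<lambda>p. repl_deriv (snd p) (snd q))"
    by (rule continuous_on_compose2[OF continuous_on_repl_deriv]) (auto intro: continuous_intros)
  then show "continuous_on (UNIV \<times> U) (\<lambda>p. if dropped pop s then (\<Sum>t\<in>fibre (pop s). snd q $ t)
       else repl_deriv (snd p) (snd q) $ s - (fst q * (snd p $ s - c$s) + fst p * snd q $ s))" for s
    by (cases "dropped pop s") (auto intro!: continuous_intros)
qed

lemma equilibria_iff_eq_map: "x \<in> equilibria M \<longleftrightarrow> eq_map (M, x) = 0 \<and> (\<forall>s. 0 \<le> x$s)"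
proof
  assume x: "x \<in> equilibria M"
  then have "x \<in> \<Delta>" and zero: "repl_mut pop f M c x = 0" by (auto simp: equilibria_def)
  have "eq_map (M, x) $ s = 0" for s
    using simplex_fibre_sum[OF \<open>x \<in> \<Delta>\<close>] arg_cong[OF zero, of "\<lambda>v. v $ s"]
    by (simp add: eq_map_def repl_mut_def algebra_simps)
  then show "eq_map (M, x) = 0 \<and> (\<forall>s. 0 \<le> x$s)" using simplex_nonneg[OF \<open>x \<in> \<Delta>\<close>] by (simp add: vec_eq_iff)
next
  assume "eq_map (M, x) = 0 \<and> (\<forall>s. 0 \<le> x$s)"
  then have eq: "eq_map (M, x) $ s = 0" and nonneg: "0 \<le> x$s" for s by simp_all
  have sums: "(\<Sum>t\<in>fibre i. x$t) = 1" for i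
    using eq[of "last_type pop i"] dropped_last_type[of i] pop_last_type[of i] by (simp add: eq_map_def)
  then have "x \<in> \<Delta>" using nonneg by (simp add: pop_simplex_def)
  have kept: "repl_mut pop f M c x $ s = 0" if "\<not> dropped pop s" for s
    using eq[of s] that by (simp add: eq_map_def repl_mut_def algebra_simps)
  have "repl_mut pop f M c x $ s = 0" for s
  proof (cases "dropped pop s")
    case True
    have "(\<Sum>t\<in>fibre (pop s). repl_mut pop f M c x $ t)
          = (\<Sum>t\<in>fibre (pop s). repl pop f x $ t) + M * ((\<Sum>t\<in>fibre (pop s). c$t) - (\<Sum>t\<in>fibre (pop s). x$t))"
      by (simp add: repl_mut_def sum.distrib sum_distrib_left right_diff_distrib sum_subtractf)
    also have "\<dots> = 0"
      using fibre_sum_repl[OF sums] sums simplex_fibre_sum[OF c_simplex] by simp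
    finally have "repl_mut pop f M c x $ s + (\<Sum>t\<in>{t. pop t = pop s \<and> t \<noteq> s}. repl_mut pop f M c x $ t) = 0"
      by (simp add: fibre_sum_split)
    moreover have "(\<Sum>t\<in>{t. pop t = pop s \<and> t \<noteq> s}. repl_mut pop f M c x $ t) = 0"
    proof (rule sum.neutral, rule ballI)
      fix t assume "t \<in> {t. pop t = pop s \<and> t \<noteq> s}"
      then have "\<not> dropped pop t" using dropped_unique[OF True, of t] by auto
      then show "repl_mut pop f M c x $ t = 0" by (rule kept)
    qed
    ultimately show ?thesis by simp
  qed (use kept in blast)
  then show "x \<in> equilibria M" using \<open>x \<in> \<Delta>\<close> by (simp add: equilibria_def vec_eq_iff)
qed

lemma eq_map_deriv_nondegenerate:
  assumes "x \<in> \<Delta>" "M > Mlow pop f" and zero: "eq_map_deriv (M, x) (0, h) = 0"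
  shows "h = 0"
proof -
  have eq: "eq_map_deriv (M, x) (0, h) $ s = 0" for s using zero by simp
  have sums: "(\<Sum>t\<in>fibre i. h$t) = 0" for i
    using eq[of "last_type pop i"] dropped_last_type[of i] pop_last_type[of i] by (simp add: eq_map_deriv_def)
  \<comment> \<open>the fibre sums of h vanish, so embed_lin recovers h from its kept coordinates\<close>
  define v where "v = (\<chi> s. if dropped pop s then 0 else h$s)"
  have "embed_lin v = h"
  proof -
    have "embed_lin v $ s = h $ s" for s
    proof (cases "dropped pop s")
      case True
      have "(\<Sum>t\<in>{t. pop t = pop s \<and> t \<noteq> s}. v$t) = (\<Sum>t\<in>{t. pop t = pop s \<and> t \<noteq> s}. h$t)"
      proof (rule sum.cong)
        fix t assume "t \<in> {t. pop t = pop s \<and> t \<noteq> s}"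
        then have "\<not> dropped pop t" using dropped_unique[OF True, of t] by auto
        then show "v$t = h$t" by (simp add: v_def)
      qed simp
      then show ?thesis
        using True fibre_sum_split[where s=s and x=h] sums[of "pop s"] by (simp add: embed_lin_def)
    qed (simp add: embed_lin_def v_def)
    then show ?thesis by (simp add: vec_eq_iff)
  qed
  moreover have "repl_deriv x h $ s = M * h$s" if "\<not> dropped pop s" for s
    using eq[of s] that by (simp add: eq_map_deriv_def)
  then have "reduced_deriv x v = M *\<^sub>R v"
    unfolding reduced_deriv_def \<open>embed_lin v = h\<close> by (simp add: v_def vec_eq_iff)
  then have "v = 0"
    using no_reduced_eigenvector_above_Mlow[OF assms(1,2)] by (simp add: v_def)
  ultimately show ?thesis
    using linear_0[OF has_derivative_linear[OF embed_has_derivative]] by simp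
qed

lemma equilibrium_branch:
  assumes "M0 > Mlow pop f" and x0: "x0 \<in> equilibria M0"
  shows "locally_unique_C1_branch equilibria M0 x0"
proof -
  have "x0 \<in> \<Delta>" using x0 by (rule equilibria_simplex)
  obtain e d b b' where "e > 0" "d > 0" "b M0 = x0" "continuous_on (ball M0 e) b'"
    and zero: "\<And>M. M \<in> ball M0 e \<Longrightarrow> eq_map (M, b M) = 0"
    and der: "\<And>M. M \<in> ball M0 e \<Longrightarrow> (b has_vector_derivative b' M) (at M)"
    and near: "\<And>M x. M \<in> ball M0 e \<Longrightarrow> dist x x0 < d \<Longrightarrow> eq_map (M, x) = 0 \<Longrightarrow> x = b M"
  proof (rule implicit_function_real_parameter[of "UNIV \<times> U" M0 x0 eq_map eq_map_deriv])
    show "open (UNIV \<times> U)" using open_U by (simp add: open_Times)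
    show "(M0, x0) \<in> UNIV \<times> U" using \<open>x0 \<in> \<Delta>\<close> simplex_subset_U by auto
    show "eq_map (M0, x0) = 0" using x0 by (simp add: equilibria_iff_eq_map)
    show "(eq_map has_derivative eq_map_deriv p) (at p)" if "p \<in> UNIV \<times> U" for p
      using that by (intro eq_map_has_derivative) auto
    show "continuous_on (UNIV \<times> U) (\<lambda>p. eq_map_deriv p q)" for q
      by (rule continuous_on_eq_map_deriv)
    show "h = 0" if "eq_map_deriv (M0, x0) (0, h) = 0" for h
      using eq_map_deriv_nondegenerate[OF \<open>x0 \<in> \<Delta>\<close> \<open>M0 > Mlow pop f\<close> that] .
  qed (rule that; assumption)
  \<comment> \<open>the branch stays in the simplex near M0 because x0 lies in its interior\<close>
  define m where "m = Min (range (\<lambda>s. x0$s))"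
  have "m > 0"
    using equilibria_pos[OF _ x0] \<open>M0 > Mlow pop f\<close> Mlow_nonneg unfolding m_def by (subst Min_gr_iff) auto
  have m_le: "m \<le> x0$s" for s unfolding m_def by (rule Min_le) auto
  have "continuous_on (ball M0 e) b"
    using der by (intro continuous_on_vector_derivative) (auto intro: has_vector_derivative_at_within)
  then obtain r where "r > 0" and r: "\<And>M. M \<in> ball M0 e \<Longrightarrow> dist M M0 < r \<Longrightarrow> dist (b M) x0 < m"
    using \<open>m > 0\<close> \<open>e > 0\<close> \<open>b M0 = x0\<close> unfolding continuous_on_iff by (metis centre_in_ball)
  define e' where "e' = min e r"
  have in_e: "M \<in> ball M0 e" if "M \<in> ball M0 e'" for M using that by (simp add: e'_def)
  have b_equilibrium: "b M \<in> equilibria M" if M: "M \<in> ball M0 e'" for M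
  proof -
    have "dist (b M) x0 < m" using r[OF in_e[OF M]] M by (simp add: e'_def dist_commute)
    then have "0 \<le> b M $ s" for s
      using component_le_norm_cart[of "b M - x0" s] m_le[of s] by (simp add: dist_norm)
    then show ?thesis using zero[OF in_e[OF M]] by (simp add: equilibria_iff_eq_map)
  qed
  show ?thesis
    unfolding locally_unique_C1_branch_def
  proof (intro exI conjI ballI impI)
    show "e' > 0" using \<open>e > 0\<close> \<open>r > 0\<close> by (simp add: e'_def)
    show "continuous_on (ball M0 e') b'"
      using \<open>continuous_on (ball M0 e) b'\<close> by (rule continuous_on_subset) (auto simp: e'_def)
    fix M assume M: "M \<in> ball M0 e'"
    show "b M \<in> equilibria M" using M by (rule b_equilibrium)
    show "(b has_vector_derivative b' M) (at M)" using der[OF in_e[OF M]] .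
    show "x = b M" if "x \<in> equilibria M" "dist x x0 < d" for x
      using near[OF in_e[OF M] that(2)] that(1) by (simp add: equilibria_iff_eq_map)
  qed (use \<open>d > 0\<close> \<open>b M0 = x0\<close> in auto)
qed

lemma unique_equilibrium: "\<forall>M > Mlow pop f. \<exists>!x. x \<in> equilibria M"
proof (rule continuation_of_uniqueness[OF _ _ compact_simplex])
  show "equilibria M \<noteq> {}" if "M > Mlow pop f" for M
    using equilibria_nonempty Mlow_nonneg that by force
  obtain L where L: "\<forall>M>L. \<forall>x\<in>equilibria M. \<forall>y\<in>equilibria M. x = y"
    using equilibria_unique_large by blast
  show "\<exists>M > Mlow pop f. \<forall>x\<in>equilibria M. \<forall>y\<in>equilibria M. x = y"
    using L[rule_format, of "max L (Mlow pop f) + 1"] by (intro exI[of _ "max L (Mlow pop f) + 1"]) auto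
next
  show "equilibria M \<subseteq> \<Delta>" for M using equilibria_simplex by blast
  show "x \<in> equilibria M" if "\<And>n. xn n \<in> equilibria (Mn n)" "Mn \<longlonglongrightarrow> M" "xn \<longlonglongrightarrow> x" for Mn xn M x
    using that by (rule equilibria_closed_graph)
  show "locally_unique_C1_branch equilibria M x" if "M > Mlow pop f" "x \<in> equilibria M" for M x
    using that by (rule equilibrium_branch)
qed

lemma equilibrium_C1: "(\<lambda>M. THE x. x \<in> equilibria M) C1_differentiable_on {Mlow pop f<..}"
  using unique_equilibrium by (rule continuation_C1) (rule equilibrium_branch)

end

theorem mainTheorem6:
  fixes pop :: "'s::{finite,linorder} \<Rightarrow> 'i"
    and f :: "'s \<Rightarrow> (real,'s) vec \<Rightarrow> real"
    and f' :: "'s \<Rightarrow> (real,'s) vec \<Rightarrow> (real,'s) vec \<Rightarrow>\<^sub>L real"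
    and U :: "((real,'s) vec) set"
    and c :: "(real,'s) vec"
  assumes "surj pop"
    and "open U" and "pop_simplex pop \<subseteq> U"
    and "\<forall>s. \<forall>x\<in>U. (f s has_derivative blinfun_apply (f' s x)) (at x)"
    and "\<forall>s. continuous_on U (f' s)"
    and "\<forall>s t. \<forall>x\<in>U. pop s = pop t \<longrightarrow> blinfun_apply (f' s x) (axis t 1) = 0"
    and "c \<in> int_simplex pop"
  shows "(\<forall>M > Mlow pop f. \<exists>!x. x \<in> pop_simplex pop \<and> repl_mut pop f M c x = 0) \<and>
         (\<lambda>M. THE x. x \<in> pop_simplex pop \<and> repl_mut pop f M c x = 0) C1_differentiable_on {Mlow pop f<..}"
proof -
  interpret replicator_mutator pop f f' U c
    using assms by unfold_locales auto
  show ?thesis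
    using unique_equilibrium equilibrium_C1 by (simp add: equilibria_def)
qed

end
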